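(* For positive integers $M_1,N_1,M_2,N_2$, let $\mathcal{O}(M_1,N_1,M_2,N_2)$ denote the set of $(d_1,d_2)\in\mathbb{R}_+^2$ satisfying $$d_i\le\min(M_i,N_i),\ i=1,2,\qquad d_1+\frac{\min(N_1,N_2,M_2)}{\min(N_2,M_2)}\,d_2\le\min(M_1+M_2,N_1).$$ Then $\mathcal{O}(M_1,N_1,M_2,N_2)=\mathcal{O}\big(M_1,N_1,\min(M_2,N_2),\min(M_2,N_2)\big)$.
   Context: The set $\mathcal{O}(M_1,N_1,M_2,N_2)$ is the DoF outer region of a two-user MIMO Z interference channel without channel state information at the transmitters, with $M_i$ transmit and $N_i$ receive antennas at user $i$. *)

theory Defs
  imports Complex_Main
begin

definition Oregion :: "nat \<Rightarrow> nat \<Rightarrow> nat \<Rightarrow> nat \<Rightarrow> (real \<times> real) set" where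
  "Oregion M1 N1 M2 N2 = {(d1, d2). d1 \<ge> 0 \<and> d2 \<ge> 0 \<and>
      d1 \<le> real (min M1 N1) \<and> d2 \<le> real (min M2 N2) \<and>
      d1 + (real (min N1 (min N2 M2)) / real (min N2 M2)) * d2 \<le> real (min (M1 + M2) N1)}"

end

theory Submission
  imports Defs
begin

text \<open>Write m = min M2 N2. The two regions share the box constraints and the weight
  min N1 m / m of d2; only the sum bound min (M1 + M2) N1 becomes min (M1 + m) N1.
  These agree unless N2 < M2 and M1 + N2 < N1, and then both bounds are at least
  M1 + N2, which the weighted sum never exceeds inside the box: the weight times
  d2 \<le> m is at most min N1 m.\<close>

lemma weighted_sum_le_box_bound:
  fixes d1 d2 :: real and a b m :: nat
  assumes "m > 0" "d1 \<le> real a" "0 \<le> d2" "d2 \<le> real m"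
  shows "d1 + (real (min b m) / real m) * d2 \<le> real a + real (min b m)"
proof -
  have "(real (min b m) / real m) * d2 \<le> (real (min b m) / real m) * real m"
    using assms by (intro mult_left_mono) auto
  also have "\<dots> = real (min b m)"
    using assms(1) by simp
  finally show ?thesis
    using assms(2) by linarith
qed

lemma sum_bound_equiv:
  fixes d1 d2 :: real and M1 N1 M2 N2 :: nat
  defines "m \<equiv> min M2 N2"
  assumes "m > 0" "d1 \<le> min M1 N1" "0 \<le> d2" "d2 \<le> m"
  shows "d1 + (real (min N1 m) / real m) * d2 \<le> min (M1 + M2) N1 \<longleftrightarrow>
         d1 + (real (min N1 m) / real m) * d2 \<le> min (M1 + m) N1"
proof (cases "M2 \<le> N2 \<or> N1 \<le> M1 + N2")
  case True
  then have "min (M1 + M2) N1 = min (M1 + m) N1"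
    by (auto simp: m_def)
  then show ?thesis by simp
next
  case False
  then have "real (min M1 N1) + min N1 m \<le> min (M1 + M2) N1"
            "real (min M1 N1) + min N1 m \<le> min (M1 + m) N1"
    by (auto simp: m_def)
  moreover have "d1 + (real (min N1 m) / real m) * d2 \<le> real (min M1 N1) + min N1 m"
    by (rule weighted_sum_le_box_bound) (use assms(2-) in auto)
  ultimately show ?thesis by linarith
qed

theorem lemma6:
  fixes M1 N1 M2 N2 :: nat
  assumes "M1 > 0" "N1 > 0" "M2 > 0" "N2 > 0"
  shows "Oregion M1 N1 M2 N2 = Oregion M1 N1 (min M2 N2) (min M2 N2)"
proof -
  define m where "m = min M2 N2"
  have "m > 0" using assms by (simp add: m_def)
  moreover have "min m m = m" "min N2 M2 = m" by (auto simp: m_def)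
  ultimately show ?thesis
    unfolding Oregion_def m_def[symmetric]
    using sum_bound_equiv[of M2 N2, folded m_def] by auto
qed

end
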